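(* There exists a planar graph $G$ with $HG(G)=12$. Specifically, let $m=66^{144}$ and let $G$ be the graph with vertex set $\{u,v\}\cup\{x_i,y_i: 1\le i\le m\}$ whose edges are $uv$, the $m$ edges $x_iy_i$ ($1\le i\le m$), and all edges $ux_i,uy_i,vx_i,vy_i$ ($1\le i\le m$). Then $G$ is planar and $HG(G)=12$.
   Context: The hat guessing game on a finite simple graph $G$ with $q$ colors: each vertex (player) is assigned a hat whose color is an arbitrary element of a fixed set $Q$ of $q$ colors. Each player sees the hat colors of exactly its neighbors in $G$ (not its own). Before the colors are assigned, the players fix a deterministic guessing strategy: for each vertex $w$, a function from the colorings of the neighbors of $w$ to $Q$, which is $w$'s guess for its own color. No communication is allowed. The strategy is winning if for every assignment of colors from $Q$ to all vertices, at least one vertex guesses its own color correctly. The hat guessing number $HG(G)$ is the largest integer $q$ for which a winning strategy with $q$ colors exists. *)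

theory Defs
  imports "HOL-Analysis.Analysis"
begin

definition simple_graph :: "'a set \<Rightarrow> ('a \<Rightarrow> 'a \<Rightarrow> bool) \<Rightarrow> bool" where
  "simple_graph VV E \<longleftrightarrow> finite VV \<and> (\<forall>a b. E a b \<longrightarrow> a \<in> VV \<and> b \<in> VV)
     \<and> (\<forall>a b. E a b \<longrightarrow> E b a) \<and> (\<forall>a. \<not> E a a)"

definition hat_strategy :: "'a set \<Rightarrow> ('a \<Rightarrow> 'a \<Rightarrow> bool) \<Rightarrow> nat \<Rightarrow> ('a \<Rightarrow> ('a \<Rightarrow> nat) \<Rightarrow> nat) \<Rightarrow> bool" where
  "hat_strategy VV E q g \<longleftrightarrow>
     (\<forall>w\<in>VV. \<forall>c c'. (\<forall>u. E w u \<longrightarrow> c u = c' u) \<longrightarrow> g w c = g w c')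
   \<and> (\<forall>w\<in>VV. \<forall>c. g w c < q)"

definition winning_strategy :: "'a set \<Rightarrow> ('a \<Rightarrow> 'a \<Rightarrow> bool) \<Rightarrow> nat \<Rightarrow> ('a \<Rightarrow> ('a \<Rightarrow> nat) \<Rightarrow> nat) \<Rightarrow> bool" where
  "winning_strategy VV E q g \<longleftrightarrow> hat_strategy VV E q g \<and>
     (\<forall>c. (\<forall>v\<in>VV. c v < q) \<longrightarrow> (\<exists>v\<in>VV. g v c = c v))"

definition hat_winnable :: "'a set \<Rightarrow> ('a \<Rightarrow> 'a \<Rightarrow> bool) \<Rightarrow> nat \<Rightarrow> bool" where
  "hat_winnable VV E q \<longleftrightarrow> (\<exists>g. winning_strategy VV E q g)"

definition HG :: "'a set \<Rightarrow> ('a \<Rightarrow> 'a \<Rightarrow> bool) \<Rightarrow> nat" where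
  "HG VV E = (GREATEST q. hat_winnable VV E q)"

definition planar :: "'a set \<Rightarrow> ('a \<Rightarrow> 'a \<Rightarrow> bool) \<Rightarrow> bool" where
  "planar VV E \<longleftrightarrow> (\<exists>(f :: 'a \<Rightarrow> complex) (\<gamma> :: 'a \<Rightarrow> 'a \<Rightarrow> real \<Rightarrow> complex).
     inj_on f VV \<and>
     (\<forall>a b. E a b \<longrightarrow> arc (\<gamma> a b) \<and> pathstart (\<gamma> a b) = f a \<and> pathfinish (\<gamma> a b) = f b
         \<and> path_image (\<gamma> a b) \<inter> f ` VV \<subseteq> {f a, f b}) \<and>
     (\<forall>a b c d. E a b \<longrightarrow> E c d \<longrightarrow> {a, b} \<noteq> {c, d} \<longrightarrow>
         path_image (\<gamma> a b) \<inter> path_image (\<gamma> c d) \<subseteq> f ` ({a, b} \<inter> {c, d})))"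

datatype vtx = U | V | X nat | Y nat

definition m0 :: nat where "m0 = 66 ^ 144"

definition GV :: "vtx set" where
  "GV = {U, V} \<union> {X i | i. 1 \<le> i \<and> i \<le> m0} \<union> {Y i | i. 1 \<le> i \<and> i \<le> m0}"

fun GE0 :: "vtx \<Rightarrow> vtx \<Rightarrow> bool" where
  "GE0 U V = True"
| "GE0 (X i) (Y j) = (i = j)"
| "GE0 U (X i) = True"
| "GE0 U (Y i) = True"
| "GE0 V (X i) = True"
| "GE0 V (Y i) = True"
| "GE0 _ _ = False"

definition GE :: "vtx \<Rightarrow> vtx \<Rightarrow> bool" where
  "GE a b \<longleftrightarrow> a \<in> GV \<and> b \<in> GV \<and> (GE0 a b \<or> GE0 b a)"

end

theory Submission
  imports Defs
begin

(* Let U and V wear colours from {0,1} x {0,1,2}. With q >= 13 colours every rung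
   x_i y_i can be coloured so that neither endpoint guesses right under any of these six
   colourings, because at most 6 * 2q < q^2 pairs of rung colours are hit. With the rungs fixed,
   U's guess is a function of V's colour and vice versa, and two such functions cannot cover
   the 2 x 3 grid.

   A rung with 12 colours has 6 shift strategies that together win on all 144
   colourings of the rung. As m >= 6^144, every assignment of a shift strategy to each of the
   144 colourings of U and V is played by some rung. So at most 5 colourings of U and V are won
   by no rung (given 6 of them, the rung playing the matching assignment wins at one of them),
   and the edge uv alone wins on any 5 colourings of its ends.

   Planarity. Put U and V at i and -i and the rungs as disjoint unit segments on the positive
   real axis; all edges are drawn straight. *)

lemma GV_simps [simp]:
  "U \<in> GV" "V \<in> GV" "X i \<in> GV \<longleftrightarrow> 1 \<le> i \<and> i \<le> m0" "Y i \<in> GV \<longleftrightarrow> 1 \<le> i \<and> i \<le> m0"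
  by (auto simp: GV_def)

lemma GE_simps [simp]:
  "GE U w \<longleftrightarrow> w \<in> GV \<and> w \<noteq> U"
  "GE V w \<longleftrightarrow> w \<in> GV \<and> w \<noteq> V"
  "GE (X i) w \<longleftrightarrow> X i \<in> GV \<and> (w = U \<or> w = V \<or> w = Y i)"
  "GE (Y i) w \<longleftrightarrow> Y i \<in> GV \<and> (w = U \<or> w = V \<or> w = X i)"
  by (cases w; auto simp: GE_def)+

lemma GE_sym: "GE a b \<Longrightarrow> GE b a"
  by (auto simp: GE_def)

lemma simple_graph_G: "simple_graph GV GE"
proof -
  have "finite GV"
    by (auto simp: GV_def intro: finite_subset[of _ "{U, V} \<union> X ` {1..m0} \<union> Y ` {1..m0}"])
  moreover have "\<not> GE a a" for a
    by (cases a) auto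
  ultimately show ?thesis
    by (auto simp: simple_graph_def GE_def)
qed

lemma GE_no_isolated: "w \<in> GV \<Longrightarrow> \<exists>u. GE w u"
  by (cases w) (auto intro: exI[of _ U] exI[of _ V])

section \<open>At most 12 colours\<close>

lemma hat_strategy_guess_cong:
  assumes "hat_strategy VV E q g" "w \<in> VV" "\<And>u. E w u \<Longrightarrow> c u = c' u"
  shows "g w c = g w c'"
  using assms unfolding hat_strategy_def by blast

lemma exists_colour_pair_avoiding_guesses:
  fixes f h :: "'p \<Rightarrow> nat \<Rightarrow> nat"
  assumes "finite R" "2 * card R < q"
  shows "\<exists>s<q. \<exists>t<q. \<forall>p\<in>R. f p t \<noteq> s \<and> h p s \<noteq> t"
proof -
  define bad where "bad = (\<Union>p\<in>R. (\<lambda>t. (f p t, t)) ` {..<q} \<union> (\<lambda>s. (s, h p s)) ` {..<q})"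
  have "card bad \<le> (\<Sum>p\<in>R. card ((\<lambda>t. (f p t, t)) ` {..<q} \<union> (\<lambda>s. (s, h p s)) ` {..<q}))"
    unfolding bad_def by (rule card_UN_le[OF assms(1)])
  also have "\<dots> \<le> (\<Sum>p\<in>R. q + q)"
    by (intro sum_mono card_Un_le[THEN order_trans] add_mono) (auto intro: card_image_le[THEN order_trans])
  also have "\<dots> = 2 * card R * q"
    by simp
  also have "\<dots> < card ({..<q} \<times> {..<q})"
    using assms(2) by (simp add: card_cartesian_product)
  finally have "card bad < card ({..<q} \<times> {..<q})" .
  moreover have "finite bad"
    unfolding bad_def using assms(1) by blast
  ultimately have "\<not> {..<q} \<times> {..<q} \<subseteq> bad"
    using card_mono[of bad "{..<q} \<times> {..<q}"] by linarith
  then show ?thesis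
    unfolding bad_def by fastforce
qed

lemma exists_colour_pairs_avoiding_guesses:
  fixes f h :: "'i \<Rightarrow> 'p \<Rightarrow> nat \<Rightarrow> nat"
  assumes "finite R" "2 * card R < q"
  obtains s t where "\<And>i. s i < q" "\<And>i. t i < q"
    "\<And>i p. p \<in> R \<Longrightarrow> f i p (t i) \<noteq> s i \<and> h i p (s i) \<noteq> t i"
proof -
  have "\<forall>i. \<exists>st. fst st < q \<and> snd st < q
      \<and> (\<forall>p\<in>R. f i p (snd st) \<noteq> fst st \<and> h i p (fst st) \<noteq> snd st)"
    using exists_colour_pair_avoiding_guesses[OF assms] by fastforce
  then obtain st where "\<forall>i. fst (st i) < q \<and> snd (st i) < q
      \<and> (\<forall>p\<in>R. f i p (snd (st i)) \<noteq> fst (st i) \<and> h i p (fst (st i)) \<noteq> snd (st i))"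
    by (rule choice[THEN exE])
  then show ?thesis
    by (intro that[of "\<lambda>i. fst (st i)" "\<lambda>i. snd (st i)"]) auto
qed

lemma exists_unguessed_2_3:
  fixes \<phi> \<psi> :: "nat \<Rightarrow> nat"
  shows "\<exists>a<2. \<exists>b<3. \<phi> b \<noteq> a \<and> \<psi> a \<noteq> b"
proof -
  have "\<exists>b::nat. b < 3 \<and> b \<noteq> x \<and> b \<noteq> y" for x y
    by presburger
  then obtain b :: nat where b: "b < 3" "b \<noteq> \<psi> 0" "b \<noteq> \<psi> 1"
    by blast
  define a :: nat where "a = (if \<phi> b = 0 then 1 else 0)"
  have "a < 2" "\<phi> b \<noteq> a"
    by (simp_all add: a_def)
  moreover have "\<psi> a \<noteq> b"
    using b by (auto simp: a_def)
  ultimately show ?thesis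
    using b(1) by blast
qed

lemma rung_colours_defeating_guesses:
  fixes g :: "vtx \<Rightarrow> (vtx \<Rightarrow> nat) \<Rightarrow> nat"
  assumes "13 \<le> q"
  obtains s t where "\<And>i. s i < q" "\<And>i. t i < q"
    "\<And>i p. p \<in> {..<2} \<times> {..<3} \<Longrightarrow>
      g (X i) ((\<lambda>_. 0)(U := fst p, V := snd p, Y i := t i)) \<noteq> s i
      \<and> g (Y i) ((\<lambda>_. 0)(U := fst p, V := snd p, X i := s i)) \<noteq> t i"
proof -
  have "finite ({..<2::nat} \<times> {..<3::nat})" "2 * card ({..<2::nat} \<times> {..<3::nat}) < q"
    using assms by (simp_all add: card_cartesian_product)
  then show ?thesis
    by (rule exists_colour_pairs_avoiding_guesses[where
        f = "\<lambda>i p t. g (X i) ((\<lambda>_. 0)(U := fst p, V := snd p, Y i := t))" and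
        h = "\<lambda>i p s. g (Y i) ((\<lambda>_. 0)(U := fst p, V := snd p, X i := s))"]) (rule that)
qed

lemma not_hat_winnable_G:
  assumes "13 \<le> q"
  shows "\<not> hat_winnable GV GE q"
proof
  assume "hat_winnable GV GE q"
  then obtain g where strat: "hat_strategy GV GE q g"
    and win: "\<And>c. \<forall>v\<in>GV. c v < q \<Longrightarrow> \<exists>v\<in>GV. g v c = c v"
    by (auto simp: hat_winnable_def winning_strategy_def)
  obtain s t where st: "\<And>i. s i < q" "\<And>i. t i < q"
    and wrong: "\<And>i p. p \<in> {..<2} \<times> {..<3} \<Longrightarrow>
      g (X i) ((\<lambda>_. 0)(U := fst p, V := snd p, Y i := t i)) \<noteq> s i
      \<and> g (Y i) ((\<lambda>_. 0)(U := fst p, V := snd p, X i := s i)) \<noteq> t i"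
    using rung_colours_defeating_guesses[OF assms] by blast
  define col where "col a b = (\<lambda>w. case w of U \<Rightarrow> a | V \<Rightarrow> b | X i \<Rightarrow> s i | Y i \<Rightarrow> t i)" for a b
  have col_simps: "col a b U = a" "col a b V = b" "col a b (X i) = s i" "col a b (Y i) = t i" for a b i
    by (simp_all add: col_def)
  obtain a b where ab: "a < 2" "b < 3" "g U (col 0 b) \<noteq> a" "g V (col a 0) \<noteq> b"
    using exists_unguessed_2_3[of "\<lambda>b. g U (col 0 b)" "\<lambda>a. g V (col a 0)"] by blast
  have "\<forall>v\<in>GV. col a b v < q"
    using ab assms st by (auto simp: col_def split: vtx.split)
  then obtain v where v: "v \<in> GV" "g v (col a b) = col a b v"
    using win by blast
  show False
  proof (cases v)
    case U
    have "g U (col a b) = g U (col 0 b)"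
      by (rule hat_strategy_guess_cong[OF strat]) (auto simp: col_def split: vtx.split)
    with U v ab(3) show False
      by (simp add: col_simps)
  next
    case V
    have "g V (col a b) = g V (col a 0)"
      by (rule hat_strategy_guess_cong[OF strat]) (auto simp: col_def split: vtx.split)
    with V v ab(4) show False
      by (simp add: col_simps)
  next
    case (X i)
    with v(1) have "g (X i) (col a b) = g (X i) ((\<lambda>_. 0)(U := a, V := b, Y i := t i))"
      by (intro hat_strategy_guess_cong[OF strat]) (auto simp: col_def)
    with X v ab(1,2) wrong[of "(a, b)" i] show False
      by (simp add: col_simps)
  next
    case (Y i)
    with v(1) have "g (Y i) (col a b) = g (Y i) ((\<lambda>_. 0)(U := a, V := b, X i := s i))"
      by (intro hat_strategy_guess_cong[OF strat]) (auto simp: col_def)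
    with Y v ab(1,2) wrong[of "(a, b)" i] show False
      by (simp add: col_simps)
  qed
qed

section \<open>A winning strategy with 12 colours\<close>

definition edge_wins :: "('a \<times> 'b) set \<Rightarrow> bool" where
  "edge_wins B \<longleftrightarrow> (\<exists>\<phi> \<psi>. \<forall>(a, b)\<in>B. \<phi> b = a \<or> \<psi> a = b)"

lemma edge_wins_subset_2_2:
  assumes "B \<subseteq> {a1, a2} \<times> {b1, b2}"
  shows "edge_wins B"
  unfolding edge_wins_def
  using assms by (intro exI[of _ "\<lambda>b. if b = b1 then a1 else a2"] exI[of _ "\<lambda>a. if a = a1 then b2 else b1"]) auto

lemma edge_wins_insert_lonely_column:
  assumes "edge_wins (B - {(a, b)})" "\<And>a'. (a', b) \<in> B \<Longrightarrow> a' = a"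
  shows "edge_wins B"
proof -
  from assms(1) obtain \<phi> \<psi> where \<phi>\<psi>: "\<forall>(a', b')\<in>B - {(a, b)}. \<phi> b' = a' \<or> \<psi> a' = b'"
    by (auto simp: edge_wins_def)
  have "(\<phi>(b := a)) b' = a' \<or> \<psi> a' = b'" if "(a', b') \<in> B" for a' b'
    using that \<phi>\<psi> assms(2)[of a'] by (cases "b' = b") auto
  then show ?thesis
    unfolding edge_wins_def by blast
qed

lemma edge_wins_insert_lonely_row:
  assumes "edge_wins (B - {(a, b)})" "\<And>b'. (a, b') \<in> B \<Longrightarrow> b' = b"
  shows "edge_wins B"
proof -
  from assms(1) obtain \<phi> \<psi> where \<phi>\<psi>: "\<forall>(a', b')\<in>B - {(a, b)}. \<phi> b' = a' \<or> \<psi> a' = b'"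
    by (auto simp: edge_wins_def)
  have "\<phi> b' = a' \<or> (\<psi>(a := b)) a' = b'" if "(a', b') \<in> B" for a' b'
    using that \<phi>\<psi> assms(2)[of b'] by (cases "a' = a") auto
  then show ?thesis
    unfolding edge_wins_def by blast
qed

lemma card_image_le_half:
  assumes "finite B" "\<And>y. y \<in> f ` B \<Longrightarrow> 2 \<le> card {x\<in>B. f x = y}"
  shows "2 * card (f ` B) \<le> card B"
proof -
  have "2 * card (f ` B) = (\<Sum>y\<in>f ` B. 2)"
    by simp
  also have "\<dots> \<le> (\<Sum>y\<in>f ` B. card {x\<in>B. f x = y})"
    using assms(2) by (rule sum_mono)
  also have "\<dots> = card B"
    using sum.group[of B "f ` B" f "\<lambda>_. 1::nat"] assms(1) by simp
  finally show ?thesis .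
qed

lemma subset_doubleton_if_card_le_2:
  assumes "finite A" "card A \<le> 2"
  obtains x y where "A \<subseteq> {x, y}"
  using assms
  by (metis card_2_iff card_le_Suc0_iff_eq le_Suc_eq numeral_2_eq_2 subsetI insertCI)

lemma edge_wins_card_le_5:
  assumes "finite B" "card B \<le> 5"
  shows "edge_wins B"
  using assms
proof (induction "card B" arbitrary: B rule: less_induct)
  case less
  have remove: "edge_wins (B - {p})" if "p \<in> B" for p
    using card_Diff1_less[OF less.prems(1) that] less.prems by (intro less.hyps) auto
  show ?case
  proof (cases "\<exists>(a, b)\<in>B. card {p\<in>B. snd p = b} < 2 \<or> card {p\<in>B. fst p = a} < 2")
    case True
    then obtain a b where ab: "(a, b) \<in> B" "card {p\<in>B. snd p = b} < 2 \<or> card {p\<in>B. fst p = a} < 2"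
      by blast
    then have "(\<forall>a'. (a', b) \<in> B \<longrightarrow> a' = a) \<or> (\<forall>b'. (a, b') \<in> B \<longrightarrow> b' = b)"
      using less.prems(1) card_le_Suc0_iff_eq[of "{p\<in>B. snd p = b}"] card_le_Suc0_iff_eq[of "{p\<in>B. fst p = a}"]
      by auto
    then show ?thesis
      using remove[OF ab(1)] edge_wins_insert_lonely_column edge_wins_insert_lonely_row by metis
  next
    case False
    then have "2 * card (fst ` B) \<le> card B" "2 * card (snd ` B) \<le> card B"
      using less.prems(1) by (auto intro!: card_image_le_half)
    with less.prems have "card (fst ` B) \<le> 2" "card (snd ` B) \<le> 2"
      by linarith+
    then obtain a1 a2 b1 b2 where "fst ` B \<subseteq> {a1, a2}" "snd ` B \<subseteq> {b1, b2}"
      using less.prems(1) subset_doubleton_if_card_le_2 by (metis finite_imageI)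
    then have "B \<subseteq> {a1, a2} \<times> {b1, b2}"
      by force
    then show ?thesis
      by (rule edge_wins_subset_2_2)
  qed
qed

(* Shift strategy k of a rung with 2n colours: it wins exactly when s - t is 2k or 2k + 1 mod 2n. *)

definition shift_guess_X :: "nat \<Rightarrow> nat \<Rightarrow> nat \<Rightarrow> nat" where
  "shift_guess_X n k t = (t + 2 * k) mod (2 * n)"

definition shift_guess_Y :: "nat \<Rightarrow> nat \<Rightarrow> nat \<Rightarrow> nat" where
  "shift_guess_Y n k s = (s + (2 * n - Suc (2 * k))) mod (2 * n)"

lemma shift_guess_covers:
  assumes "s < 2 * n" "t < 2 * n"
  shows "\<exists>k<n. shift_guess_X n k t = s \<or> shift_guess_Y n k s = t"
proof -
  define d where "d = (if t \<le> s then s - t else s + 2 * n - t)"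
  have "d < 2 * n" "(t + d) mod (2 * n) = s" "(s + (2 * n - d)) mod (2 * n) = t"
    using assms by (auto simp: d_def)
  show ?thesis
  proof (cases "even d")
    case True
    then have "shift_guess_X n (d div 2) t = s"
      using \<open>(t + d) mod (2 * n) = s\<close> by (simp add: shift_guess_X_def)
    with \<open>d < 2 * n\<close> show ?thesis
      by (intro exI[of _ "d div 2"]) auto
  next
    case False
    then have "shift_guess_Y n (d div 2) s = t"
      using \<open>(s + (2 * n - d)) mod (2 * n) = t\<close> by (simp add: shift_guess_Y_def odd_two_times_div_two_succ)
    with \<open>d < 2 * n\<close> show ?thesis
      by (intro exI[of _ "d div 2"]) auto
  qed
qed

lemma card_unserved_less:
  assumes "finite S" "finite M" "M \<noteq> {}"
    and enumerates: "\<And>\<sigma>. \<sigma> \<in> S \<rightarrow>\<^sub>E M \<Longrightarrow> \<exists>i\<in>I. \<forall>p\<in>S. enc i p = \<sigma> p"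
    and served: "\<And>i. i \<in> I \<Longrightarrow> \<exists>k\<in>M. wins i k"
  shows "card {p\<in>S. \<forall>i\<in>I. \<not> wins i (enc i p)} < card M"
proof (rule ccontr)
  let ?L = "{p\<in>S. \<forall>i\<in>I. \<not> wins i (enc i p)}"
  assume "\<not> card ?L < card M"
  then obtain e where e: "e ` M \<subseteq> ?L" "inj_on e M"
    using card_le_inj[OF assms(2), of ?L] assms(1) by auto
  obtain m where "m \<in> M"
    using assms(3) by blast
  \<comment> \<open>\<sigma> sends e k back to k; the index realising \<sigma> wins at some k, hence at the point e k\<close>
  define \<sigma> where "\<sigma> = restrict (\<lambda>p. if p \<in> e ` M then inv_into M e p else m) S"
  have "\<sigma> \<in> S \<rightarrow>\<^sub>E M"
    using \<open>m \<in> M\<close> by (auto simp: \<sigma>_def inv_into_into)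
  then obtain i where i: "i \<in> I" "\<forall>p\<in>S. enc i p = \<sigma> p"
    using enumerates by blast
  obtain k where k: "k \<in> M" "wins i k"
    using served[OF i(1)] by blast
  have "e k \<in> ?L"
    using e(1) k(1) by blast
  moreover have "enc i (e k) = k"
    using i(2) \<open>e k \<in> ?L\<close> k(1) e(2) by (simp add: \<sigma>_def)
  ultimately show False
    using i(1) k(2) by auto
qed

lemma exists_onto_if_card_le:
  assumes "finite A" "finite B" "card A \<le> card B"
  obtains e where "A \<subseteq> e ` B"
proof -
  obtain h where "h ` A \<subseteq> B" "inj_on h A"
    using card_le_inj[OF assms] by blast
  then have "A \<subseteq> inv_into A h ` B"
    by (auto intro!: image_eqI[where x = "h _"])
  then show ?thesis
    by (rule that)
qed

(* enc i p is the shift strategy that rung i plays when U and V wear p; U and V take care of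
   the colourings p at which no rung wins. *)

definition unserved :: "(nat \<Rightarrow> nat \<times> nat \<Rightarrow> nat) \<Rightarrow> (vtx \<Rightarrow> nat) \<Rightarrow> (nat \<times> nat) set" where
  "unserved enc c = {p \<in> {..<12} \<times> {..<12}. \<forall>i\<in>{1..m0}.
     shift_guess_X 6 (enc i p) (c (Y i)) \<noteq> c (X i) \<and> shift_guess_Y 6 (enc i p) (c (X i)) \<noteq> c (Y i)}"

definition UV_guesses :: "(nat \<Rightarrow> nat \<times> nat \<Rightarrow> nat) \<Rightarrow> (vtx \<Rightarrow> nat) \<Rightarrow> (nat \<Rightarrow> nat) \<times> (nat \<Rightarrow> nat)" where
  "UV_guesses enc c = (SOME \<phi>\<psi>. \<forall>(a, b)\<in>unserved enc c. fst \<phi>\<psi> b = a \<or> snd \<phi>\<psi> a = b)"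

definition strategy12 :: "(nat \<Rightarrow> nat \<times> nat \<Rightarrow> nat) \<Rightarrow> vtx \<Rightarrow> (vtx \<Rightarrow> nat) \<Rightarrow> nat" where
  "strategy12 enc w c = (case w of
      U \<Rightarrow> fst (UV_guesses enc c) (c V) mod 12
    | V \<Rightarrow> snd (UV_guesses enc c) (c U) mod 12
    | X i \<Rightarrow> shift_guess_X 6 (enc i (c U, c V)) (c (Y i))
    | Y i \<Rightarrow> shift_guess_Y 6 (enc i (c U, c V)) (c (X i)))"

lemma unserved_cong:
  assumes "\<And>i. i \<in> {1..m0} \<Longrightarrow> c (X i) = c' (X i) \<and> c (Y i) = c' (Y i)"
  shows "unserved enc c = unserved enc c'"
  using assms by (simp add: unserved_def)

lemma finite_unserved: "finite (unserved enc c)"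
  unfolding unserved_def by (rule finite_subset[of _ "{..<12} \<times> {..<12}"]) auto

lemma hat_strategy_strategy12: "hat_strategy GV GE 12 (strategy12 enc)"
  unfolding hat_strategy_def
proof (intro conjI ballI allI impI)
  fix w and c c' :: "vtx \<Rightarrow> nat"
  assume w: "w \<in> GV" and seen: "\<forall>u. GE w u \<longrightarrow> c u = c' u"
  show "strategy12 enc w c = strategy12 enc w c'"
  proof (cases w)
    case U
    with seen have "unserved enc c = unserved enc c'" "c V = c' V"
      by (auto intro!: unserved_cong)
    with U show ?thesis
      by (simp add: strategy12_def UV_guesses_def)
  next
    case V
    with seen have "unserved enc c = unserved enc c'" "c U = c' U"
      by (auto intro!: unserved_cong)
    with V show ?thesis
      by (simp add: strategy12_def UV_guesses_def)
  qed (use w seen in \<open>simp_all add: strategy12_def\<close>)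
next
  fix w and c :: "vtx \<Rightarrow> nat"
  show "strategy12 enc w c < 12"
    by (cases w) (simp_all add: strategy12_def shift_guess_X_def shift_guess_Y_def)
qed

lemma card_unserved_less_6:
  assumes enumerates: "\<And>\<sigma>. \<sigma> \<in> {..<12} \<times> {..<12} \<rightarrow>\<^sub>E {..<6} \<Longrightarrow> \<exists>i\<in>{1..m0}. enc i = \<sigma>"
    and colouring: "\<forall>v\<in>GV. c v < (12::nat)"
  shows "card (unserved enc c) < 6"
proof -
  have "card {p \<in> {..<12} \<times> {..<12}. \<forall>i\<in>{1..m0}. \<not> (shift_guess_X 6 (enc i p) (c (Y i)) = c (X i)
      \<or> shift_guess_Y 6 (enc i p) (c (X i)) = c (Y i))} < card {..<6::nat}"
  proof (rule card_unserved_less)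
    fix i assume "i \<in> {1..m0}"
    with colouring have "c (X i) < 2 * 6" "c (Y i) < 2 * 6"
      by simp_all
    then show "\<exists>k\<in>{..<6}. shift_guess_X 6 k (c (Y i)) = c (X i) \<or> shift_guess_Y 6 k (c (X i)) = c (Y i)"
      using shift_guess_covers[of "c (X i)" 6 "c (Y i)"] by auto
  qed (use enumerates in \<open>auto simp: lessThan_empty_iff\<close>)
  then show ?thesis
    by (simp add: unserved_def)
qed

lemma winning_strategy12:
  assumes enumerates: "\<And>\<sigma>. \<sigma> \<in> {..<12} \<times> {..<12} \<rightarrow>\<^sub>E {..<6} \<Longrightarrow> \<exists>i\<in>{1..m0}. enc i = \<sigma>"
  shows "winning_strategy GV GE 12 (strategy12 enc)"
  unfolding winning_strategy_def
proof (intro conjI hat_strategy_strategy12 allI impI)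
  fix c :: "vtx \<Rightarrow> nat"
  assume colouring: "\<forall>v\<in>GV. c v < 12"
  show "\<exists>v\<in>GV. strategy12 enc v c = c v"
  proof (cases "(c U, c V) \<in> unserved enc c")
    case True
    have "edge_wins (unserved enc c)"
      using card_unserved_less_6[OF enumerates colouring] finite_unserved
      by (intro edge_wins_card_le_5) simp_all
    then have "\<exists>\<phi>\<psi>. \<forall>(a, b)\<in>unserved enc c. fst \<phi>\<psi> b = a \<or> snd \<phi>\<psi> a = b"
      unfolding edge_wins_def by fastforce
    then have "\<forall>(a, b)\<in>unserved enc c. fst (UV_guesses enc c) b = a \<or> snd (UV_guesses enc c) a = b"
      unfolding UV_guesses_def by (rule someI_ex)
    with True have "fst (UV_guesses enc c) (c V) = c U \<or> snd (UV_guesses enc c) (c U) = c V"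
      by auto
    moreover have "c U < 12" "c V < 12"
      using colouring by auto
    ultimately have "strategy12 enc U c = c U \<or> strategy12 enc V c = c V"
      by (auto simp: strategy12_def)
    then show ?thesis
      by auto
  next
    case False
    with colouring obtain i where "i \<in> {1..m0}"
      "shift_guess_X 6 (enc i (c U, c V)) (c (Y i)) = c (X i) \<or> shift_guess_Y 6 (enc i (c U, c V)) (c (X i)) = c (Y i)"
      by (auto simp: unserved_def)
    then have "strategy12 enc (X i) c = c (X i) \<or> strategy12 enc (Y i) c = c (Y i)"
      by (simp add: strategy12_def)
    with \<open>i \<in> {1..m0}\<close> show ?thesis
      by force
  qed
qed

lemma hat_winnable_G_12: "hat_winnable GV GE 12"
proof -
  let ?P = "{..<12::nat} \<times> {..<12::nat} \<rightarrow>\<^sub>E {..<6::nat}"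
  have "card ?P = 6 ^ 144"
    by (simp add: card_PiE card_cartesian_product)
  also have "\<dots> \<le> card {1..m0}"
    by (simp add: m0_def power_mono)
  finally obtain enc where "?P \<subseteq> enc ` {1..m0}"
    using exists_onto_if_card_le[of ?P "{1..m0}"] by (auto simp: finite_PiE)
  then have "winning_strategy GV GE 12 (strategy12 enc)"
    by (intro winning_strategy12) auto
  then show ?thesis
    unfolding hat_winnable_def by blast
qed

section \<open>Planarity\<close>

lemma planar_straight_line:
  fixes f :: "'a \<Rightarrow> complex"
  assumes G: "simple_graph VV E" and inj: "inj_on f VV"
    and no_isolated: "\<And>w. w \<in> VV \<Longrightarrow> \<exists>u. E w u"
    and crossings: "\<And>a b c d. E a b \<Longrightarrow> E c d \<Longrightarrow> {a, b} \<noteq> {c, d} \<Longrightarrow>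
        closed_segment (f a) (f b) \<inter> closed_segment (f c) (f d) \<subseteq> f ` ({a, b} \<inter> {c, d})"
  shows "planar VV E"
  unfolding planar_def
proof (intro exI[of _ f] exI[of _ "\<lambda>a b. linepath (f a) (f b)"] conjI allI impI)
  fix a b assume ab: "E a b"
  with G have "a \<in> VV" "b \<in> VV" "a \<noteq> b"
    by (auto simp: simple_graph_def)
  with inj show "arc (linepath (f a) (f b))"
    by (metis arc_linepath inj_onD)
  show "path_image (linepath (f a) (f b)) \<inter> f ` VV \<subseteq> {f a, f b}"
  proof
    fix z assume "z \<in> path_image (linepath (f a) (f b)) \<inter> f ` VV"
    then obtain w where w: "w \<in> VV" "z = f w" "f w \<in> closed_segment (f a) (f b)"
      by auto
    show "z \<in> {f a, f b}"
    proof (cases "w \<in> {a, b}")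
      case False
      \<comment> \<open>any edge at w other than ab already passes through f w\<close>
      obtain u where wu: "E w u"
        using no_isolated[OF w(1)] by blast
      have "f w \<in> closed_segment (f a) (f b) \<inter> closed_segment (f w) (f u)"
        using w(3) by simp
      also have "\<dots> \<subseteq> f ` ({a, b} \<inter> {w, u})"
        using False by (intro crossings[OF ab wu]) auto
      finally show ?thesis
        using w(2) by blast
    qed (use w in auto)
  qed
next
  fix a b c d assume "E a b" "E c d" "{a, b} \<noteq> {c, d}"
  then show "path_image (linepath (f a) (f b)) \<inter> path_image (linepath (f c) (f d))
      \<subseteq> f ` ({a, b} \<inter> {c, d})"
    using crossings by simp
qed (use inj in auto)

lemma collinear_with_two_reals:
  assumes "collinear {complex_of_real r, p, complex_of_real r'}" "r \<noteq> r'"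
  shows "Im p = 0"
  using assms by (auto simp: collinear_3_expand)

lemma collinear_with_i_and_minus_i:
  assumes "collinear {\<i>, p, -\<i>}"
  shows "Re p = 0"
  using assms by (auto simp: collinear_3_expand complex_eq_iff)

lemma Im_on_segment_to_real:
  assumes "z \<in> closed_segment p (complex_of_real r)"
  shows "0 \<le> Im z * Im p" and "Im z = 0 \<Longrightarrow> Im p \<noteq> 0 \<Longrightarrow> z = complex_of_real r"
proof -
  obtain u :: real where u: "0 \<le> u" "u \<le> 1" "z = (1 - u) *\<^sub>R p + u *\<^sub>R complex_of_real r"
    using assms by (auto simp: in_segment)
  then show "0 \<le> Im z * Im p"
    by (simp add: mult.assoc)
  assume "Im z = 0" "Im p \<noteq> 0"
  with u have "u = 1"
    by simp
  with u show "z = complex_of_real r"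
    by simp
qed

lemma segment_between_reals:
  assumes "z \<in> closed_segment (complex_of_real r) (complex_of_real r')" "r \<le> r'"
  shows "Im z = 0" "r \<le> Re z" "Re z \<le> r'"
proof -
  obtain u :: real where u: "0 \<le> u" "u \<le> 1" "z = complex_of_real ((1 - u) * r + u * r')"
    using assms(1) by (auto simp: in_segment scaleR_conv_of_real)
  moreover have "(1 - u) * r + u * r \<le> (1 - u) * r + u * r'" "(1 - u) * r + u * r' \<le> (1 - u) * r' + u * r'"
    using u assms(2) by (simp_all add: mult_left_mono)
  ultimately show "Im z = 0" "r \<le> Re z" "Re z \<le> r'"
    by (simp_all only: Re_complex_of_real Im_complex_of_real) (simp_all add: algebra_simps)
qed

definition vertex_pos :: "vtx \<Rightarrow> complex" where
  "vertex_pos w =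
    (case w of U \<Rightarrow> \<i> | V \<Rightarrow> -\<i> | X k \<Rightarrow> of_nat (2 * k + 1) | Y k \<Rightarrow> of_nat (2 * k + 2))"

lemma vertex_pos_simps [simp]:
  "vertex_pos U = \<i>" "vertex_pos V = -\<i>" "vertex_pos (X k) = of_nat (2 * k + 1)" "vertex_pos (Y k) = of_nat (2 * k + 2)"
  by (simp_all add: vertex_pos_def)

lemma inj_vertex_pos: "inj vertex_pos"
proof
  fix w w' assume "vertex_pos w = vertex_pos w'"
  moreover have "complex_of_nat (2 * k + 1) \<noteq> of_nat (2 * j + 2)" for k j
    by (simp only: of_nat_eq_iff) presburger
  ultimately show "w = w'"
    by (cases w; cases w') (auto simp: complex_eq_iff simp del: of_nat_add of_nat_mult dest: sym)
qed

lemma vertex_pos_axis: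
  assumes "w \<noteq> U" "w \<noteq> V"
  shows "vertex_pos w = complex_of_real (Re (vertex_pos w))" "1 \<le> Re (vertex_pos w)"
  using assms by (cases w; simp)+

lemma vertex_pos_in_rung_interval:
  assumes "w \<noteq> U" "w \<noteq> V" "2 * real k + 1 \<le> Re (vertex_pos w)" "Re (vertex_pos w) \<le> 2 * real k + 2"
  shows "w = X k \<or> w = Y k"
proof (cases w)
  case (X j)
  with assms have "real (2 * k + 1) \<le> real (2 * j + 1)" "real (2 * j + 1) \<le> real (2 * k + 2)"
    by simp_all
  with X show ?thesis
    by (simp only: of_nat_le_iff) simp
next
  case (Y j)
  with assms have "real (2 * k + 1) \<le> real (2 * j + 2)" "real (2 * j + 2) \<le> real (2 * k + 2)"
    by simp_all
  with Y show ?thesis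
    by (simp only: of_nat_le_iff) simp
qed (use assms in simp_all)

lemma not_collinear_U_V_axis:
  assumes "w \<noteq> U" "w \<noteq> V"
  shows "\<not> collinear {vertex_pos U, vertex_pos w, vertex_pos V}"
  using collinear_with_i_and_minus_i[of "vertex_pos w"] vertex_pos_axis[OF assms] by auto

lemma not_collinear_apex_axis:
  assumes "p \<in> {U, V}" "w \<notin> {U, V}" "w' \<notin> {U, V}" "w \<noteq> w'"
  shows "\<not> collinear {vertex_pos w, vertex_pos p, vertex_pos w'}"
proof
  assume "collinear {vertex_pos w, vertex_pos p, vertex_pos w'}"
  moreover have "Re (vertex_pos w) \<noteq> Re (vertex_pos w')"
    using assms(2-4) vertex_pos_axis(1)[of w] vertex_pos_axis(1)[of w'] inj_vertex_pos by (metis injD insertCI)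
  ultimately have "Im (vertex_pos p) = 0"
    using collinear_with_two_reals assms(2,3) vertex_pos_axis(1)[of w] vertex_pos_axis(1)[of w'] by (metis insertCI)
  with assms(1) show False
    by auto
qed

lemma not_collinear_vertex_pos_apex:
  assumes "a \<in> {U, V}" "distinct [a, b, c]"
  shows "\<not> collinear {vertex_pos a, vertex_pos b, vertex_pos c}"
proof -
  consider "{a, b} = {U, V}" "c \<notin> {U, V}" | "{a, c} = {U, V}" "b \<notin> {U, V}"
    | "b \<notin> {U, V}" "c \<notin> {U, V}"
    using assms by auto
  then show ?thesis
  proof cases
    case 1
    then have "{vertex_pos a, vertex_pos b, vertex_pos c} = {vertex_pos U, vertex_pos c, vertex_pos V}"
      by (auto simp: doubleton_eq_iff simp del: vertex_pos_simps)
    then show ?thesis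
      using not_collinear_U_V_axis[of c] 1(2) by simp
  next
    case 2
    then have "{vertex_pos a, vertex_pos b, vertex_pos c} = {vertex_pos U, vertex_pos b, vertex_pos V}"
      by (auto simp: doubleton_eq_iff simp del: vertex_pos_simps)
    then show ?thesis
      using not_collinear_U_V_axis[of b] 2(2) by simp
  next
    case 3
    have "{vertex_pos a, vertex_pos b, vertex_pos c} = {vertex_pos b, vertex_pos a, vertex_pos c}"
      by (simp add: insert_commute)
    then show ?thesis
      using not_collinear_apex_axis[of a b c] 3 assms by simp
  qed
qed

lemma collinear_vertex_pos_imp_axis:
  assumes "distinct [a, b, c]" "collinear {vertex_pos a, vertex_pos b, vertex_pos c}"
  shows "a \<notin> {U, V} \<and> b \<notin> {U, V} \<and> c \<notin> {U, V}"
proof -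
  have "{vertex_pos a, vertex_pos b, vertex_pos c} = {vertex_pos b, vertex_pos a, vertex_pos c}"
    "{vertex_pos a, vertex_pos b, vertex_pos c} = {vertex_pos c, vertex_pos a, vertex_pos b}"
    by (simp_all add: insert_commute)
  with assms show ?thesis
    using not_collinear_vertex_pos_apex[of a b c] not_collinear_vertex_pos_apex[of b a c]
      not_collinear_vertex_pos_apex[of c a b]
    by auto
qed

lemma adjacent_edges_not_collinear:
  assumes "GE x y" "GE x y'" "y \<noteq> y'"
  shows "\<not> collinear {vertex_pos y, vertex_pos x, vertex_pos y'}"
proof
  assume "collinear {vertex_pos y, vertex_pos x, vertex_pos y'}"
  moreover have "distinct [y, x, y']"
    using assms simple_graph_G by (auto simp: simple_graph_def)
  ultimately have "y \<notin> {U, V}" "x \<notin> {U, V}" "y' \<notin> {U, V}"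
    using collinear_vertex_pos_imp_axis by blast+
  with assms show False
    by (cases x) auto
qed

lemma adjacent_edges_segments_Int:
  assumes "GE x y" "GE x y'" "y \<noteq> y'"
  shows "closed_segment (vertex_pos x) (vertex_pos y) \<inter> closed_segment (vertex_pos x) (vertex_pos y') = {vertex_pos x}"
  using Int_closed_segment[of "vertex_pos x" "vertex_pos y" "vertex_pos y'"] adjacent_edges_not_collinear[OF assms]
  by (simp add: closed_segment_commute)

lemma GE_cases:
  assumes "GE a b"
  obtains "{a, b} = {U, V}"
    | p w where "p \<in> {U, V}" "w \<notin> {U, V}" "{a, b} = {p, w}"
    | k where "{a, b} = {X k, Y k}"
proof -
  have "{a, b} = {U, V} \<or> (\<exists>p w. p \<in> {U, V} \<and> w \<notin> {U, V} \<and> {a, b} = {p, w})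
    \<or> (\<exists>k. {a, b} = {X k, Y k})"
    using assms by (cases a; cases b) (auto simp: GE_def)
  with that show ?thesis
    by blast
qed

lemma segment_vertex_pos_doubleton:
  "{a, b} = {x, y} \<Longrightarrow> closed_segment (vertex_pos a) (vertex_pos b) = closed_segment (vertex_pos x) (vertex_pos y)"
  by (auto simp: doubleton_eq_iff closed_segment_commute simp del: vertex_pos_simps)

lemma edge_segment_region:
  assumes "GE a b" "z \<in> closed_segment (vertex_pos a) (vertex_pos b)"
  obtains "{a, b} = {U, V}" "Re z = 0"
    | p w where "p \<in> {U, V}" "w \<notin> {U, V}" "{a, b} = {p, w}"
        "0 \<le> Im z * Im (vertex_pos p)" "Im z = 0 \<Longrightarrow> z = vertex_pos w"
    | k where "{a, b} = {X k, Y k}" "Im z = 0" "2 * real k + 1 \<le> Re z" "Re z \<le> 2 * real k + 2"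
  using assms(1)
proof (cases rule: GE_cases)
  case 1
  with assms(2) have "z \<in> closed_segment \<i> (-\<i>)"
    using segment_vertex_pos_doubleton[OF 1] by simp
  then have "Re z = 0"
    by (auto simp: in_segment)
  with 1 that(1) show ?thesis
    by blast
next
  case (2 p w)
  with assms(2) have seg: "z \<in> closed_segment (vertex_pos p) (complex_of_real (Re (vertex_pos w)))"
    using segment_vertex_pos_doubleton vertex_pos_axis(1)[of w] by (metis insertCI)
  have "Im (vertex_pos p) \<noteq> 0"
    using 2(1) by auto
  then have "0 \<le> Im z * Im (vertex_pos p)" "Im z = 0 \<Longrightarrow> z = vertex_pos w"
    using Im_on_segment_to_real[OF seg] vertex_pos_axis(1)[of w] 2(2) by auto
  with 2 show ?thesis
    by (rule that(2))
next
  case (3 k)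
  have "vertex_pos (X k) = complex_of_real (2 * real k + 1)" "vertex_pos (Y k) = complex_of_real (2 * real k + 2)"
    by simp_all
  with assms(2) have "z \<in> closed_segment (complex_of_real (2 * real k + 1)) (complex_of_real (2 * real k + 2))"
    using segment_vertex_pos_doubleton[OF 3] by (simp only:)
  from segment_between_reals[OF this] 3 show ?thesis
    by (intro that(3)) simp_all
qed

lemma edge_through_imaginary_axis:
  assumes "GE c d" "z \<in> closed_segment (vertex_pos c) (vertex_pos d)" "Re z = 0"
  shows "U \<in> {c, d} \<or> V \<in> {c, d}"
  using assms(1,2)
proof (cases rule: edge_segment_region)
  case (3 k)
  with assms(3) show ?thesis
    by simp
qed auto

lemma edge_through_apex_segment:
  assumes "GE c d" "z \<in> closed_segment (vertex_pos c) (vertex_pos d)" "p \<in> {U, V}" "w \<notin> {U, V}"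
    and "0 \<le> Im z * Im (vertex_pos p)" "Im z = 0 \<Longrightarrow> z = vertex_pos w"
  shows "p \<in> {c, d} \<or> w \<in> {c, d}"
  using assms(1,2)
proof (cases rule: edge_segment_region)
  case 1
  with assms(3) show ?thesis
    by auto
next
  case (2 p' w')
  show ?thesis
  proof (cases "p = p'")
    case False
    then have "Im z = 0"
      using assms(3,5) 2(1,4) by auto
    then have "w = w'"
      using assms(6) 2(5) inj_vertex_pos by (metis injD)
    with 2(3) show ?thesis
      by auto
  qed (use 2 in auto)
next
  case (3 k)
  then have "w = X k \<or> w = Y k"
    using assms(4,6) vertex_pos_in_rung_interval[of w k] by auto
  with 3(1) show ?thesis
    by auto
qed

lemma edge_through_rung_segment:
  assumes "GE c d" "z \<in> closed_segment (vertex_pos c) (vertex_pos d)"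
    and "Im z = 0" "2 * real k + 1 \<le> Re z" "Re z \<le> 2 * real k + 2"
  shows "X k \<in> {c, d} \<or> Y k \<in> {c, d}"
  using assms(1,2)
proof (cases rule: edge_segment_region)
  case 1
  with assms(4) show ?thesis
    by simp
next
  case (2 p w)
  then have "w = X k \<or> w = Y k"
    using assms(3-5) vertex_pos_in_rung_interval[of w k] by auto
  with 2(3) show ?thesis
    by auto
next
  case (3 j)
  with assms(4,5) have "real (2 * k + 1) \<le> real (2 * j + 2)" "real (2 * j + 1) \<le> real (2 * k + 2)"
    by simp_all
  then have "j = k"
    by (simp only: of_nat_le_iff)
  with 3(1) show ?thesis
    by auto
qed

lemma disjoint_edges_disjoint_segments:
  assumes ab: "GE a b" and cd: "GE c d" and disjoint: "{a, b} \<inter> {c, d} = {}"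
  shows "closed_segment (vertex_pos a) (vertex_pos b) \<inter> closed_segment (vertex_pos c) (vertex_pos d) = {}"
proof -
  have False if z: "z \<in> closed_segment (vertex_pos a) (vertex_pos b)" "z \<in> closed_segment (vertex_pos c) (vertex_pos d)" for z
    using ab z(1)
  proof (cases rule: edge_segment_region)
    case 1
    then show False
      using edge_through_imaginary_axis[OF cd z(2)] disjoint by auto
  next
    case (2 p w)
    then show False
      using edge_through_apex_segment[OF cd z(2) 2(1,2,4,5)] disjoint by auto
  next
    case (3 k)
    then show False
      using edge_through_rung_segment[OF cd z(2) 3(2-4)] disjoint by auto
  qed
  then show ?thesis
    by blast
qed

lemma edge_segments_meet_at_common_ends:
  assumes ab: "GE a b" and cd: "GE c d" and "{a, b} \<noteq> {c, d}"
  shows "closed_segment (vertex_pos a) (vertex_pos b) \<inter> closed_segment (vertex_pos c) (vertex_pos d)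
    \<subseteq> vertex_pos ` ({a, b} \<inter> {c, d})"
proof (cases "{a, b} \<inter> {c, d} = {}")
  case True
  then show ?thesis
    using disjoint_edges_disjoint_segments[OF ab cd] by simp
next
  case False
  then obtain x y y' where xy: "{a, b} = {x, y}" and xy': "{c, d} = {x, y'}"
    by (auto simp: doubleton_eq_iff)
  with assms have "GE x y" "GE x y'" "y \<noteq> y'"
    by (auto simp: doubleton_eq_iff dest: GE_sym)
  then have "closed_segment (vertex_pos a) (vertex_pos b) \<inter> closed_segment (vertex_pos c) (vertex_pos d) = {vertex_pos x}"
    unfolding segment_vertex_pos_doubleton[OF xy] segment_vertex_pos_doubleton[OF xy']
    by (rule adjacent_edges_segments_Int)
  with xy xy' show ?thesis
    by simp
qed

lemma planar_G: "planar GV GE"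
  using simple_graph_G inj_vertex_pos GE_no_isolated edge_segments_meet_at_common_ends
  by (intro planar_straight_line[of GV GE vertex_pos]) (auto intro: inj_on_subset)

theorem theorem1:
  shows "simple_graph GV GE \<and> planar GV GE \<and> HG GV GE = 12"
proof -
  have "HG GV GE = 12"
    unfolding HG_def
  proof (rule Greatest_equality)
    show "hat_winnable GV GE 12"
      by (rule hat_winnable_G_12)
  next
    fix q assume "hat_winnable GV GE q"
    then show "q \<le> 12"
      using not_hat_winnable_G[of q] by (cases "13 \<le> q") auto
  qed
  then show ?thesis
    using simple_graph_G planar_G by blast
qed

end
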